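(* Let $\theta\in\mathcal{D}(\mathcal{X})$, let $\kappa>0$ be a threshold for a fairness property $\psi$, and let $T>0$ be a time horizon. For a trace $\tau\in(\mathcal{X}\times\mathcal{Y})^{\le T}$ let $v(\tau)=\min_{\pi\in\Pi_{\mathtt{fair}}^{\theta,(T-|\tau|)\mid\tau}}\mathbb{E}[\mathit{cost}\mid\tau;\theta,\pi,T-|\tau|]$. Then for $|\tau|=T$, $v(\tau)=0$ if $\psi(\tau)\le\kappa$ and $v(\tau)=\infty$ otherwise; for $|\tau|<T$, $v(\tau)=\sum_{x=(g,r,c)\in\mathcal{X}}\theta(x)\cdot\min\{v(\tau\cdot(x,y=r)),\ v(\tau\cdot(x,y\neq r))+c\}$, where $(x,y=r)$ denotes the pair with output equal to $r$ and $(x,y\neq r)$ the pair with output $1-r$; and the shield $\pi^*(\tau,x)=\arg\min_{y\in\mathcal{Y}}v(\tau\cdot(x,y))$ satisfies $\pi^*=\arg\min_{\pi\in\Pi_{\mathtt{fair}}^{\theta,T}}\mathbb{E}[\mathit{cost};\theta,\pi,T]$.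
   Context: Let $\mathcal{G}=\{a,b\}$ (groups), $\mathbb{B}=\{0,1\}$ (1 = accept), $\mathbb{C}\subset\mathbb{R}_{\ge0}$ finite (costs); input space $\mathcal{X}=\mathcal{G}\times\mathbb{B}\times\mathbb{C}$, an input $x=(g,r,c)$ consisting of group, recommended decision and intervention cost; output space $\mathcal{Y}=\mathbb{B}$. A shield is $\pi:(\mathcal{X}\times\mathcal{Y})^*\times\mathcal{X}\to\mathcal{Y}$; $\Pi^t$ denotes shields defined on $(\mathcal{X}\times\mathcal{Y})^{\le t}\times\mathcal{X}$. $\mathtt{FT}^t_{\theta,\pi}$ is the set of traces $(x_1,y_1)\dots(x_t,y_t)$ with $\theta(x_i)>0$ and $y_i=\pi((x_1,y_1)\dots(x_{i-1},y_{i-1}),x_i)$. $\mathbb{P}(\tau;\theta,\pi)=\prod_i\theta(x_i)$ if $\tau\in\mathtt{FT}^t_{\theta,\pi}$ and $0$ otherwise; $\mathbb{P}(\tau'\mid\tau;\theta,\pi)=\mathbb{P}(\tau\tau';\theta,\pi)/\mathbb{P}(\tau;\theta,\pi)$. $\mathit{cost}(\tau)=\sum_i c_i\mathbb{1}[r_i\neq y_i]$ for $x_i=(g_i,r_i,c_i)$. $\mathbb{E}[\mathit{cost};\theta,\pi,t]=\sum_{\tau\in(\mathcal{X}\times\mathcal{Y})^t}\mathit{cost}(\tau)\mathbb{P}(\tau;\theta,\pi)$ and $\mathbb{E}[\mathit{cost}\mid\tau;\theta,\pi,t]=\sum_{\tau'\in(\mathcal{X}\times\mathcal{Y})^t}\mathit{cost}(\tau')\mathbb{P}(\tau'\mid\tau;\theta,\pi)$.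 A fairness property is a map $\psi$ from finite traces to $\mathbb{R}$ (bias). $\Pi_{\mathtt{fair}}^{\theta,T}=\{\pi\in\Pi^T:\forall\tau\in\mathtt{FT}^T_{\theta,\pi},\ \psi(\tau)\le\kappa\}$ and $\Pi_{\mathtt{fair}}^{\theta,t\mid\tau}=\{\pi\in\Pi^t:\forall\tau'\in(\mathcal{X}\times\mathcal{Y})^t,\ \tau\tau'\in\mathtt{FT}^{|\tau|+t}_{\theta,\pi}\Rightarrow\psi(\tau\tau')\le\kappa\}$. *)

theory Defs
  imports Complex_Main "HOL-Library.Extended_Real"
begin

datatype grp = GA | GB

text \<open>Inputs x = (g, r, c): group, recommended decision (True = accept), cost.\<close>
type_synonym inp = "grp \<times> bool \<times> real"
type_synonym trace = "(inp \<times> bool) list"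
type_synonym shield = "trace \<Rightarrow> inp \<Rightarrow> bool"

definition Xs :: "real set \<Rightarrow> inp set" where
  "Xs C = UNIV \<times> UNIV \<times> C"

definition cost :: "trace \<Rightarrow> real" where
  "cost \<tau> = sum_list (map (\<lambda>((g, r, c), y). if r \<noteq> y then c else 0) \<tau>)"

definition FT :: "(inp \<Rightarrow> real) \<Rightarrow> shield \<Rightarrow> nat \<Rightarrow> trace set" where
  "FT \<theta> \<pi> t = {\<tau>. length \<tau> = t \<and>
     (\<forall>i<t. \<theta> (fst (\<tau> ! i)) > 0 \<and> snd (\<tau> ! i) = \<pi> (take i \<tau>) (fst (\<tau> ! i)))}"

definition prob :: "(inp \<Rightarrow> real) \<Rightarrow> shield \<Rightarrow> trace \<Rightarrow> real" where
  "prob \<theta> \<pi> \<tau> = (if \<tau> \<in> FT \<theta> \<pi> (length \<tau>) then (\<Prod>i<length \<tau>. \<theta> (fst (\<tau> ! i))) else 0)"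

definition FTc :: "(inp \<Rightarrow> real) \<Rightarrow> shield \<Rightarrow> trace \<Rightarrow> nat \<Rightarrow> trace set" where
  "FTc \<theta> \<pi> \<tau> t = {\<tau>'. length \<tau>' = t \<and>
     (\<forall>i<t. \<theta> (fst (\<tau>' ! i)) > 0 \<and> snd (\<tau>' ! i) = \<pi> (\<tau> @ take i \<tau>') (fst (\<tau>' ! i)))}"

definition cprob :: "(inp \<Rightarrow> real) \<Rightarrow> shield \<Rightarrow> trace \<Rightarrow> trace \<Rightarrow> real" where
  "cprob \<theta> \<pi> \<tau> \<tau>' = (if \<tau>' \<in> FTc \<theta> \<pi> \<tau> (length \<tau>') then (\<Prod>i<length \<tau>'. \<theta> (fst (\<tau>' ! i))) else 0)"

definition traces :: "real set \<Rightarrow> nat \<Rightarrow> trace set" where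
  "traces C t = {\<tau>. length \<tau> = t \<and> set \<tau> \<subseteq> Xs C \<times> UNIV}"

definition Ecost :: "real set \<Rightarrow> (inp \<Rightarrow> real) \<Rightarrow> shield \<Rightarrow> nat \<Rightarrow> real" where
  "Ecost C \<theta> \<pi> t = (\<Sum>\<tau>\<in>traces C t. cost \<tau> * prob \<theta> \<pi> \<tau>)"

definition Ecost_cond :: "real set \<Rightarrow> (inp \<Rightarrow> real) \<Rightarrow> shield \<Rightarrow> trace \<Rightarrow> nat \<Rightarrow> real" where
  "Ecost_cond C \<theta> \<pi> \<tau> t = (\<Sum>\<tau>'\<in>traces C t. cost \<tau>' * cprob \<theta> \<pi> \<tau> \<tau>')"

definition fair_shields :: "(inp \<Rightarrow> real) \<Rightarrow> (trace \<Rightarrow> real) \<Rightarrow> real \<Rightarrow> nat \<Rightarrow> shield set" where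
  "fair_shields \<theta> \<psi> \<kappa> T = {\<pi>. \<forall>\<tau>\<in>FT \<theta> \<pi> T. \<psi> \<tau> \<le> \<kappa>}"

definition fair_shields_cond :: "(inp \<Rightarrow> real) \<Rightarrow> (trace \<Rightarrow> real) \<Rightarrow> real \<Rightarrow> nat \<Rightarrow> trace \<Rightarrow> shield set" where
  "fair_shields_cond \<theta> \<psi> \<kappa> t \<tau> = {\<pi>. \<forall>\<tau>'. \<tau>' \<in> FTc \<theta> \<pi> \<tau> t \<longrightarrow> \<psi> (\<tau> @ \<tau>') \<le> \<kappa>}"

text \<open>Value function v(tau); the minimum over an empty set of shields is +infinity.\<close>
definition val :: "real set \<Rightarrow> (inp \<Rightarrow> real) \<Rightarrow> (trace \<Rightarrow> real) \<Rightarrow> real \<Rightarrow> nat \<Rightarrow> trace \<Rightarrow> ereal" where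
  "val C \<theta> \<psi> \<kappa> T \<tau> = (INF \<pi> \<in> fair_shields_cond \<theta> \<psi> \<kappa> (T - length \<tau>) \<tau>.
       ereal (Ecost_cond C \<theta> \<pi> \<tau> (T - length \<tau>)))"

definition dev_cost :: "inp \<Rightarrow> bool \<Rightarrow> real" where
  "dev_cost x y = (case x of (g, r, c) \<Rightarrow> if y \<noteq> r then c else 0)"

end

theory Submission
  imports Defs
begin

text \<open>
  Conditioning on the first input splits the expected remaining cost of a shield after a history
  into the \<open>\<theta>\<close>-weighted deviation cost of its first decision plus its expected cost after the
  one-step extension; fairness after a history likewise splits into fairness after every one-step
  extension by an input of positive probability. Hence every fair shield costs at least the
  Bellman sum of the values of the extensions, and gluing optimal shields for the extensions,
  which exist by induction on the remaining horizon, attains it. A shield that picks a minimising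
  decision at every history then realises the value step by step, so by the same induction it is
  fair and optimal.
\<close>

lemma finite_Xs:
  assumes "finite C"
  shows "finite (Xs C)"
proof -
  have "(UNIV :: grp set) = {GA, GB}"
    using grp.exhaust by auto
  then have "finite (UNIV :: grp set)"
    by (metis finite.emptyI finite.insertI)
  with assms show ?thesis
    by (simp add: Xs_def)
qed

lemma traces_0: "traces C 0 = {[]}"
  by (auto simp: traces_def)

lemma traces_Suc: "traces C (Suc t) = (\<lambda>(p, l). p # l) ` ((Xs C \<times> UNIV) \<times> traces C t)"
  by (force simp: traces_def length_Suc_conv)

lemma FTc_0: "FTc \<theta> \<pi> \<tau> 0 = {[]}"
  by (auto simp: FTc_def)

lemma FTc_Cons: "p # l \<in> FTc \<theta> \<pi> \<tau> (Suc n) \<longleftrightarrow>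
    \<theta> (fst p) > 0 \<and> snd p = \<pi> \<tau> (fst p) \<and> l \<in> FTc \<theta> \<pi> (\<tau> @ [p]) n"
  unfolding FTc_def mem_Collect_eq All_less_Suc2 by (simp add: conj_ac)

lemma FTc_Suc: "\<tau>' \<in> FTc \<theta> \<pi> \<tau> (Suc n) \<longleftrightarrow>
    (\<exists>x l. \<tau>' = (x, \<pi> \<tau> x) # l \<and> \<theta> x > 0 \<and> l \<in> FTc \<theta> \<pi> (\<tau> @ [(x, \<pi> \<tau> x)]) n)"
proof
  assume \<tau>': "\<tau>' \<in> FTc \<theta> \<pi> \<tau> (Suc n)"
  then obtain p l where "\<tau>' = p # l"
    by (cases \<tau>') (auto simp: FTc_def)
  with \<tau>' show "\<exists>x l. \<tau>' = (x, \<pi> \<tau> x) # l \<and> \<theta> x > 0 \<and> l \<in> FTc \<theta> \<pi> (\<tau> @ [(x, \<pi> \<tau> x)]) n"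
    by (cases p) (auto simp: FTc_Cons)
qed (auto simp: FTc_Cons)

lemma FTc_cong:
  "(\<And>h z. \<pi>\<^sub>1 (\<tau> @ h) z = \<pi>\<^sub>2 (\<tau> @ h) z) \<Longrightarrow> FTc \<theta> \<pi>\<^sub>1 \<tau> n = FTc \<theta> \<pi>\<^sub>2 \<tau> n"
  by (simp add: FTc_def)

lemma cprob_Cons:
  assumes "\<And>x. \<theta> x \<ge> 0"
  shows "cprob \<theta> \<pi> \<tau> (p # l) =
    (if snd p = \<pi> \<tau> (fst p) then \<theta> (fst p) * cprob \<theta> \<pi> (\<tau> @ [p]) l else 0)"
proof -
  have prod: "(\<Prod>i<length (p # l). \<theta> (fst ((p # l) ! i))) = \<theta> (fst p) * (\<Prod>i<length l. \<theta> (fst (l ! i)))"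
    by (simp only: length_Cons prod.lessThan_Suc_shift) simp
  have "\<theta> (fst p) > 0 \<or> \<theta> (fst p) = 0"
    using assms[of "fst p"] by linarith
  then show ?thesis
    unfolding cprob_def using FTc_Cons[of p l \<theta> \<pi> \<tau> "length l"] prod by auto
qed

lemma cprob_nonneg:
  assumes "\<And>x. \<theta> x \<ge> 0"
  shows "cprob \<theta> \<pi> \<tau> l \<ge> 0"
  unfolding cprob_def by (simp add: prod_nonneg assms)

lemma cost_Cons: "cost ((x, y) # l) = dev_cost x y + cost l"
  by (cases x) (auto simp: cost_def dev_cost_def)

lemma cost_nonneg: "(\<And>c. c \<in> C \<Longrightarrow> c \<ge> 0) \<Longrightarrow> l \<in> traces C t \<Longrightarrow> cost l \<ge> 0"
  unfolding cost_def traces_def Xs_def by (intro sum_list_nonneg) auto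

lemma dev_cost_nonneg: "(\<And>c. c \<in> C \<Longrightarrow> c \<ge> 0) \<Longrightarrow> x \<in> Xs C \<Longrightarrow> dev_cost x y \<ge> 0"
  by (auto simp: Xs_def dev_cost_def)

lemma Ecost_cond_0: "Ecost_cond C \<theta> \<pi> \<tau> 0 = 0"
  by (simp add: Ecost_cond_def traces_0 cost_def)

lemma Ecost_cond_cong:
  "(\<And>h z. \<pi>\<^sub>1 (\<tau> @ h) z = \<pi>\<^sub>2 (\<tau> @ h) z) \<Longrightarrow> Ecost_cond C \<theta> \<pi>\<^sub>1 \<tau> n = Ecost_cond C \<theta> \<pi>\<^sub>2 \<tau> n"
  by (simp add: Ecost_cond_def cprob_def FTc_cong[of \<pi>\<^sub>1 \<tau> \<pi>\<^sub>2])

lemma fair_shields_cond_0: "fair_shields_cond \<theta> \<psi> \<kappa> 0 \<tau> = (if \<psi> \<tau> \<le> \<kappa> then UNIV else {})"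
  by (auto simp: fair_shields_cond_def FTc_0)

lemma fair_shields_cond_Suc: "\<pi> \<in> fair_shields_cond \<theta> \<psi> \<kappa> (Suc t) \<tau> \<longleftrightarrow>
    (\<forall>x. \<theta> x > 0 \<longrightarrow> \<pi> \<in> fair_shields_cond \<theta> \<psi> \<kappa> t (\<tau> @ [(x, \<pi> \<tau> x)]))"
  by (auto simp: fair_shields_cond_def FTc_Suc)

lemma fair_shields_cond_cong:
  "(\<And>h z. \<pi>\<^sub>1 (\<tau> @ h) z = \<pi>\<^sub>2 (\<tau> @ h) z) \<Longrightarrow>
    \<pi>\<^sub>1 \<in> fair_shields_cond \<theta> \<psi> \<kappa> n \<tau> \<longleftrightarrow> \<pi>\<^sub>2 \<in> fair_shields_cond \<theta> \<psi> \<kappa> n \<tau>"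
  by (simp add: fair_shields_cond_def FTc_cong[of \<pi>\<^sub>1 \<tau> \<pi>\<^sub>2])

lemma Ecost_eq_Ecost_cond_Nil: "Ecost C \<theta> \<pi> T = Ecost_cond C \<theta> \<pi> [] T"
  by (simp add: Ecost_def Ecost_cond_def prob_def cprob_def FT_def FTc_def)

lemma fair_shields_eq_fair_shields_cond_Nil:
  "fair_shields \<theta> \<psi> \<kappa> T = fair_shields_cond \<theta> \<psi> \<kappa> T []"
  by (auto simp: fair_shields_def fair_shields_cond_def FT_def FTc_def)

locale shield_problem =
  fixes C :: "real set" and \<theta> :: "inp \<Rightarrow> real" and \<psi> :: "trace \<Rightarrow> real" and \<kappa> :: real
  assumes finite_C: "finite C" and C_nonneg: "\<And>c. c \<in> C \<Longrightarrow> c \<ge> 0"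
    and \<theta>_nonneg: "\<And>x. \<theta> x \<ge> 0"
    and \<theta>_supp: "\<And>x. x \<notin> Xs C \<Longrightarrow> \<theta> x = 0"
    and \<theta>_sum: "(\<Sum>x\<in>Xs C. \<theta> x) = 1"
begin

abbreviation fair :: "nat \<Rightarrow> trace \<Rightarrow> shield set" where
  "fair t \<tau> \<equiv> fair_shields_cond \<theta> \<psi> \<kappa> t \<tau>"

abbreviation ecost :: "shield \<Rightarrow> trace \<Rightarrow> nat \<Rightarrow> real" where
  "ecost \<pi> \<tau> t \<equiv> Ecost_cond C \<theta> \<pi> \<tau> t"

lemma sum_traces_Suc:
  "(\<Sum>l\<in>traces C (Suc t). f l * cprob \<theta> \<pi> \<tau> l) =
   (\<Sum>x\<in>Xs C. \<theta> x * (\<Sum>l\<in>traces C t. f ((x, \<pi> \<tau> x) # l) * cprob \<theta> \<pi> (\<tau> @ [(x, \<pi> \<tau> x)]) l))"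
proof -
  have inj: "inj_on (\<lambda>(p, l). p # l) ((Xs C \<times> UNIV) \<times> traces C t)"
    by (auto simp: inj_on_def)
  have "(\<Sum>l\<in>traces C (Suc t). f l * cprob \<theta> \<pi> \<tau> l) =
      (\<Sum>p\<in>Xs C \<times> UNIV. \<Sum>l\<in>traces C t. f (p # l) * cprob \<theta> \<pi> \<tau> (p # l))"
    unfolding traces_Suc sum.reindex[OF inj] sum.cartesian_product by (simp add: case_prod_beta)
  also have "\<dots> = (\<Sum>(x, y)\<in>Xs C \<times> UNIV. if y = \<pi> \<tau> x then
      \<theta> x * (\<Sum>l\<in>traces C t. f ((x, y) # l) * cprob \<theta> \<pi> (\<tau> @ [(x, y)]) l) else 0)"
    by (rule sum.cong) (auto simp: cprob_Cons[OF \<theta>_nonneg] sum_distrib_left mult_ac)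
  also have "\<dots> = (\<Sum>x\<in>Xs C. \<Sum>y\<in>UNIV. if y = \<pi> \<tau> x then
      \<theta> x * (\<Sum>l\<in>traces C t. f ((x, y) # l) * cprob \<theta> \<pi> (\<tau> @ [(x, y)]) l) else 0)"
    by (rule sum.cartesian_product[symmetric])
  finally show ?thesis
    by simp
qed

lemma sum_cprob: "(\<Sum>l\<in>traces C t. cprob \<theta> \<pi> \<tau> l) = 1"
proof (induction t arbitrary: \<tau>)
  case 0
  then show ?case
    by (simp add: traces_0 cprob_def FTc_0)
next
  case (Suc t)
  then show ?case
    using sum_traces_Suc[where f = "\<lambda>_. 1"] \<theta>_sum by simp
qed

lemma Ecost_cond_Suc: "ecost \<pi> \<tau> (Suc t) =
    (\<Sum>x\<in>Xs C. \<theta> x * (dev_cost x (\<pi> \<tau> x) + ecost \<pi> (\<tau> @ [(x, \<pi> \<tau> x)]) t))"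
proof -
  have "(\<Sum>l\<in>traces C t. cost ((x, y) # l) * cprob \<theta> \<pi> (\<tau> @ [(x, y)]) l) =
      dev_cost x y + ecost \<pi> (\<tau> @ [(x, y)]) t" for x y
    by (simp add: cost_Cons distrib_right sum.distrib flip: sum_distrib_left)
      (simp add: sum_cprob Ecost_cond_def)
  then show ?thesis
    unfolding Ecost_cond_def[of C \<theta> \<pi> \<tau>] sum_traces_Suc by simp
qed

lemma ereal_Ecost_cond_Suc: "ereal (ecost \<pi> \<tau> (Suc t)) =
    (\<Sum>x\<in>Xs C. ereal (\<theta> x) *
      (ereal (ecost \<pi> (\<tau> @ [(x, \<pi> \<tau> x)]) t) + ereal (dev_cost x (\<pi> \<tau> x))))"
  by (simp add: Ecost_cond_Suc add.commute)

lemma Ecost_cond_nonneg: "ecost \<pi> \<tau> t \<ge> 0"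
  unfolding Ecost_cond_def
  by (intro sum_nonneg mult_nonneg_nonneg cost_nonneg[OF C_nonneg] cprob_nonneg[OF \<theta>_nonneg])

definition opt_cost :: "nat \<Rightarrow> trace \<Rightarrow> ereal" where
  "opt_cost t \<tau> = (INF \<pi> \<in> fair t \<tau>. ereal (ecost \<pi> \<tau> t))"

lemma val_eq_opt_cost: "val C \<theta> \<psi> \<kappa> T \<tau> = opt_cost (T - length \<tau>) \<tau>"
  by (simp add: val_def opt_cost_def)

lemma opt_cost_nonneg: "0 \<le> opt_cost t \<tau>"
  unfolding opt_cost_def by (rule INF_greatest) (simp add: Ecost_cond_nonneg)

lemma opt_cost_le: "\<pi> \<in> fair t \<tau> \<Longrightarrow> opt_cost t \<tau> \<le> ereal (ecost \<pi> \<tau> t)"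
  unfolding opt_cost_def by (rule INF_lower)

lemma fair_nonempty_if_opt_cost_finite: "opt_cost t \<tau> < \<infinity> \<Longrightarrow> fair t \<tau> \<noteq> {}"
  unfolding opt_cost_def by (auto simp flip: top_ereal_def)

lemma opt_cost_finite_if_fair: "\<pi> \<in> fair t \<tau> \<Longrightarrow> opt_cost t \<tau> < \<infinity>"
  using opt_cost_le[of \<pi> t \<tau>] by auto

lemma opt_cost_0: "opt_cost 0 \<tau> = (if \<psi> \<tau> \<le> \<kappa> then 0 else \<infinity>)"
  unfolding opt_cost_def fair_shields_cond_0 Ecost_cond_0 by (simp add: top_ereal_def)

definition step_value :: "nat \<Rightarrow> trace \<Rightarrow> inp \<Rightarrow> ereal" where
  "step_value t \<tau> x = (case x of (g, r, c) \<Rightarrow>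
     min (opt_cost t (\<tau> @ [(x, r)])) (opt_cost t (\<tau> @ [(x, \<not> r)]) + ereal c))"

lemma step_value_le: "step_value t \<tau> x \<le> opt_cost t (\<tau> @ [(x, y)]) + ereal (dev_cost x y)"
  by (cases x) (auto simp: step_value_def dev_cost_def)

lemma step_value_attained: "\<exists>y. step_value t \<tau> x = opt_cost t (\<tau> @ [(x, y)]) + ereal (dev_cost x y)"
proof -
  obtain g r c where x: "x = (g, r, c)"
    by (cases x) auto
  show ?thesis
    by (cases "opt_cost t (\<tau> @ [(x, r)]) \<le> opt_cost t (\<tau> @ [(x, \<not> r)]) + ereal c")
      (auto simp: x step_value_def dev_cost_def min_def)
qed

lemma step_value_nonneg: "x \<in> Xs C \<Longrightarrow> 0 \<le> step_value t \<tau> x"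
  using step_value_attained[of t \<tau> x] opt_cost_nonneg dev_cost_nonneg[OF C_nonneg]
  by (metis add_nonneg_nonneg ereal_less_eq(5))

definition bellman :: "nat \<Rightarrow> trace \<Rightarrow> ereal" where
  "bellman t \<tau> = (\<Sum>x\<in>Xs C. ereal (\<theta> x) * step_value t \<tau> x)"

lemma step_value_finite:
  assumes finite: "bellman t \<tau> < \<infinity>" and pos: "\<theta> x > 0"
  shows "step_value t \<tau> x < \<infinity>"
proof -
  have x: "x \<in> Xs C"
    using \<theta>_supp[of x] pos by force
  have "ereal (\<theta> x) * step_value t \<tau> x \<le> bellman t \<tau>"
    using sum_mono2[of "Xs C" "{x}" "\<lambda>z. ereal (\<theta> z) * step_value t \<tau> z"]
      finite_Xs[OF finite_C] x step_value_nonneg \<theta>_nonneg ereal_mult_left_mono[of 0]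
    unfolding bellman_def by fastforce
  then have "ereal (\<theta> x) * step_value t \<tau> x < \<infinity>"
    using finite by (rule le_less_trans)
  with pos show ?thesis
    by (cases "step_value t \<tau> x") auto
qed

lemma bellman_le_Ecost_cond:
  assumes \<pi>: "\<pi> \<in> fair (Suc t) \<tau>"
  shows "bellman t \<tau> \<le> ereal (ecost \<pi> \<tau> (Suc t))"
  unfolding bellman_def ereal_Ecost_cond_Suc
proof (rule sum_mono)
  fix x
  show "ereal (\<theta> x) * step_value t \<tau> x \<le>
      ereal (\<theta> x) * (ereal (ecost \<pi> (\<tau> @ [(x, \<pi> \<tau> x)]) t) + ereal (dev_cost x (\<pi> \<tau> x)))"
  proof (cases "\<theta> x > 0")
    case True
    with \<pi> have "\<pi> \<in> fair t (\<tau> @ [(x, \<pi> \<tau> x)])"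
      unfolding fair_shields_cond_Suc by blast
    then have "step_value t \<tau> x \<le> ereal (ecost \<pi> (\<tau> @ [(x, \<pi> \<tau> x)]) t) + ereal (dev_cost x (\<pi> \<tau> x))"
      using step_value_le[of t \<tau> x "\<pi> \<tau> x"] by (meson add_right_mono opt_cost_le order_trans)
    then show ?thesis
      by (rule ereal_mult_left_mono) (simp add: \<theta>_nonneg)
  next
    case False
    then have "\<theta> x = 0"
      using \<theta>_nonneg[of x] by linarith
    then show ?thesis
      by (simp flip: zero_ereal_def)
  qed
qed

lemma bellman_le_opt_cost: "bellman t \<tau> \<le> opt_cost (Suc t) \<tau>"
  unfolding opt_cost_def by (rule INF_greatest) (rule bellman_le_Ecost_cond)

lemma Ecost_cond_eq_bellman:
  assumes step: "\<And>x. \<theta> x > 0 \<Longrightarrow> \<pi> \<in> fair t (\<tau> @ [(x, \<pi> \<tau> x)]) \<and>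
      ereal (ecost \<pi> (\<tau> @ [(x, \<pi> \<tau> x)]) t) + ereal (dev_cost x (\<pi> \<tau> x)) = step_value t \<tau> x"
  shows "\<pi> \<in> fair (Suc t) \<tau>" and "ereal (ecost \<pi> \<tau> (Suc t)) = bellman t \<tau>"
proof -
  show "\<pi> \<in> fair (Suc t) \<tau>"
    unfolding fair_shields_cond_Suc using step by blast
  have "ereal (\<theta> x) * (ereal (ecost \<pi> (\<tau> @ [(x, \<pi> \<tau> x)]) t) + ereal (dev_cost x (\<pi> \<tau> x))) =
      ereal (\<theta> x) * step_value t \<tau> x" for x
  proof (cases "\<theta> x > 0")
    case True
    then have "ereal (ecost \<pi> (\<tau> @ [(x, \<pi> \<tau> x)]) t) + ereal (dev_cost x (\<pi> \<tau> x)) = step_value t \<tau> x"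
      using step by blast
    then show ?thesis
      by (simp only:)
  next
    case False
    then have "\<theta> x = 0"
      using \<theta>_nonneg[of x] by linarith
    then show ?thesis
      by (simp flip: zero_ereal_def)
  qed
  then show "ereal (ecost \<pi> \<tau> (Suc t)) = bellman t \<tau>"
    unfolding ereal_Ecost_cond_Suc bellman_def by simp
qed

lemma bellman_attained:
  assumes optimal: "\<And>\<tau>'. fair t \<tau>' \<noteq> {} \<Longrightarrow> \<exists>\<pi>\<in>fair t \<tau>'. ereal (ecost \<pi> \<tau>' t) = opt_cost t \<tau>'"
    and finite: "bellman t \<tau> < \<infinity>"
  shows "\<exists>\<pi>\<in>fair (Suc t) \<tau>. ereal (ecost \<pi> \<tau> (Suc t)) = bellman t \<tau>"
proof -
  obtain act where act: "\<And>x. step_value t \<tau> x = opt_cost t (\<tau> @ [(x, act x)]) + ereal (dev_cost x (act x))"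
    using step_value_attained by metis
  have "\<exists>\<pi>. \<theta> x > 0 \<longrightarrow> \<pi> \<in> fair t (\<tau> @ [(x, act x)]) \<and>
      ereal (ecost \<pi> (\<tau> @ [(x, act x)]) t) = opt_cost t (\<tau> @ [(x, act x)])" for x
  proof (cases "\<theta> x > 0")
    case True
    then have "opt_cost t (\<tau> @ [(x, act x)]) + ereal (dev_cost x (act x)) < \<infinity>"
      using step_value_finite[OF finite] act by metis
    then have "opt_cost t (\<tau> @ [(x, act x)]) < \<infinity>"
      by (cases "opt_cost t (\<tau> @ [(x, act x)])") auto
    then show ?thesis
      using optimal fair_nonempty_if_opt_cost_finite by blast
  qed simp
  then obtain cont where cont: "\<And>x. \<theta> x > 0 \<Longrightarrow> cont x \<in> fair t (\<tau> @ [(x, act x)]) \<and>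
      ereal (ecost (cont x) (\<tau> @ [(x, act x)]) t) = opt_cost t (\<tau> @ [(x, act x)])"
    by metis
  \<comment> \<open>After the first decision, the glued shield follows the continuation chosen for the first input.\<close>
  define \<pi> :: shield where "\<pi> h z = (if h = \<tau> then act z else cont (fst (h ! length \<tau>)) h z)" for h z
  have \<pi>_\<tau>: "\<pi> \<tau> x = act x" for x
    by (simp add: \<pi>_def)
  have \<pi>_after: "\<pi> ((\<tau> @ [(x, act x)]) @ h) z = cont x ((\<tau> @ [(x, act x)]) @ h) z" for x h z
    by (simp add: \<pi>_def)
  have "\<pi> \<in> fair t (\<tau> @ [(x, \<pi> \<tau> x)]) \<and>
      ereal (ecost \<pi> (\<tau> @ [(x, \<pi> \<tau> x)]) t) + ereal (dev_cost x (\<pi> \<tau> x)) = step_value t \<tau> x"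
    if "\<theta> x > 0" for x
  proof -
    have "\<pi> \<in> fair t (\<tau> @ [(x, act x)]) \<longleftrightarrow> cont x \<in> fair t (\<tau> @ [(x, act x)])"
      by (rule fair_shields_cond_cong) (rule \<pi>_after)
    moreover have "ecost \<pi> (\<tau> @ [(x, act x)]) t = ecost (cont x) (\<tau> @ [(x, act x)]) t"
      by (rule Ecost_cond_cong) (rule \<pi>_after)
    ultimately show ?thesis
      using cont[OF that] act[of x] by (simp add: \<pi>_\<tau>)
  qed
  then show ?thesis
    using Ecost_cond_eq_bellman by blast
qed

lemma optimal_shield_exists: "fair t \<tau> \<noteq> {} \<Longrightarrow> \<exists>\<pi>\<in>fair t \<tau>. ereal (ecost \<pi> \<tau> t) = opt_cost t \<tau>"
proof (induction t arbitrary: \<tau>)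
  case 0
  then show ?case
    by (simp add: opt_cost_0 fair_shields_cond_0 Ecost_cond_0 split: if_splits)
next
  case (Suc t)
  then obtain \<pi>\<^sub>0 where "\<pi>\<^sub>0 \<in> fair (Suc t) \<tau>"
    by blast
  then have "bellman t \<tau> < \<infinity>"
    using bellman_le_Ecost_cond le_less_trans by fastforce
  then obtain \<pi> where \<pi>: "\<pi> \<in> fair (Suc t) \<tau>" "ereal (ecost \<pi> \<tau> (Suc t)) = bellman t \<tau>"
    using bellman_attained[OF Suc.IH] by blast
  then have "opt_cost (Suc t) \<tau> \<le> bellman t \<tau>"
    using opt_cost_le by metis
  with \<pi> show ?case
    using bellman_le_opt_cost[of t \<tau>] by auto
qed

lemma opt_cost_Suc: "opt_cost (Suc t) \<tau> = bellman t \<tau>"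
proof (cases "bellman t \<tau> < \<infinity>")
  case True
  then obtain \<pi> where "\<pi> \<in> fair (Suc t) \<tau>" "ereal (ecost \<pi> \<tau> (Suc t)) = bellman t \<tau>"
    using bellman_attained[OF optimal_shield_exists] by blast
  then have "opt_cost (Suc t) \<tau> \<le> bellman t \<tau>"
    using opt_cost_le by metis
  then show ?thesis
    using bellman_le_opt_cost by (rule antisym)
next
  case False
  then show ?thesis
    using bellman_le_opt_cost[of t \<tau>] by simp
qed

lemma greedy_shield_optimal:
  assumes greedy: "\<And>\<tau> x y. length \<tau> < T \<Longrightarrow> set \<tau> \<subseteq> Xs C \<times> UNIV \<Longrightarrow> x \<in> Xs C \<Longrightarrow>
      opt_cost (T - Suc (length \<tau>)) (\<tau> @ [(x, \<pi> \<tau> x)]) + ereal (dev_cost x (\<pi> \<tau> x))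
        \<le> opt_cost (T - Suc (length \<tau>)) (\<tau> @ [(x, y)]) + ereal (dev_cost x y)"
  shows "length \<tau> + t = T \<Longrightarrow> set \<tau> \<subseteq> Xs C \<times> UNIV \<Longrightarrow> opt_cost t \<tau> < \<infinity> \<Longrightarrow>
      \<pi> \<in> fair t \<tau> \<and> ereal (ecost \<pi> \<tau> t) = opt_cost t \<tau>"
proof (induction t arbitrary: \<tau>)
  case 0
  then show ?case
    by (simp add: opt_cost_0 fair_shields_cond_0 Ecost_cond_0 split: if_splits)
next
  case (Suc t)
  have short: "length \<tau> < T" and remaining: "T - Suc (length \<tau>) = t"
    using Suc.prems(1) by auto
  have finite: "bellman t \<tau> < \<infinity>"
    using Suc.prems(3) by (simp add: opt_cost_Suc)
  have "\<pi> \<in> fair t (\<tau> @ [(x, \<pi> \<tau> x)]) \<and>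
      ereal (ecost \<pi> (\<tau> @ [(x, \<pi> \<tau> x)]) t) + ereal (dev_cost x (\<pi> \<tau> x)) = step_value t \<tau> x"
    if pos: "\<theta> x > 0" for x
  proof -
    have x: "x \<in> Xs C"
      using \<theta>_supp[of x] pos by force
    obtain y where y: "step_value t \<tau> x = opt_cost t (\<tau> @ [(x, y)]) + ereal (dev_cost x y)"
      using step_value_attained by blast
    have "opt_cost t (\<tau> @ [(x, \<pi> \<tau> x)]) + ereal (dev_cost x (\<pi> \<tau> x)) \<le> step_value t \<tau> x"
      using greedy[OF short Suc.prems(2) x, of y] y remaining by simp
    then have step: "opt_cost t (\<tau> @ [(x, \<pi> \<tau> x)]) + ereal (dev_cost x (\<pi> \<tau> x)) = step_value t \<tau> x"
      using step_value_le by (rule antisym)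
    then have "opt_cost t (\<tau> @ [(x, \<pi> \<tau> x)]) < \<infinity>"
      using step_value_finite[OF finite pos] by (cases "opt_cost t (\<tau> @ [(x, \<pi> \<tau> x)])") auto
    moreover have "length (\<tau> @ [(x, \<pi> \<tau> x)]) + t = T" "set (\<tau> @ [(x, \<pi> \<tau> x)]) \<subseteq> Xs C \<times> UNIV"
      using Suc.prems(1,2) x by auto
    ultimately show ?thesis
      using Suc.IH step by simp
  qed
  then show ?case
    using Ecost_cond_eq_bellman by (simp add: opt_cost_Suc)
qed

lemma greedy_shield_minimises_Ecost:
  assumes greedy: "\<And>\<tau> x y. length \<tau> < T \<Longrightarrow> set \<tau> \<subseteq> Xs C \<times> UNIV \<Longrightarrow> x \<in> Xs C \<Longrightarrow>
      opt_cost (T - Suc (length \<tau>)) (\<tau> @ [(x, \<pi> \<tau> x)]) + ereal (dev_cost x (\<pi> \<tau> x))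
        \<le> opt_cost (T - Suc (length \<tau>)) (\<tau> @ [(x, y)]) + ereal (dev_cost x y)"
    and nonempty: "fair_shields \<theta> \<psi> \<kappa> T \<noteq> {}"
  shows "\<pi> \<in> fair_shields \<theta> \<psi> \<kappa> T \<and> (\<forall>\<pi>'\<in>fair_shields \<theta> \<psi> \<kappa> T. Ecost C \<theta> \<pi> T \<le> Ecost C \<theta> \<pi>' T)"
proof -
  have "opt_cost T [] < \<infinity>"
    using nonempty opt_cost_finite_if_fair by (auto simp: fair_shields_eq_fair_shields_cond_Nil)
  then have \<pi>: "\<pi> \<in> fair T [] \<and> ereal (ecost \<pi> [] T) = opt_cost T []"
    using greedy_shield_optimal[OF greedy, of "[]" T] by simp
  have "ecost \<pi> [] T \<le> ecost \<pi>' [] T" if "\<pi>' \<in> fair T []" for \<pi>'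
    using \<pi> opt_cost_le[OF that] by (metis ereal_less_eq(3))
  with \<pi> show ?thesis
    by (simp add: fair_shields_eq_fair_shields_cond_Nil Ecost_eq_Ecost_cond_Nil)
qed

end

theorem lemma6p1:
  fixes C :: "real set" and \<theta> :: "inp \<Rightarrow> real" and \<psi> :: "trace \<Rightarrow> real"
    and \<kappa> :: real and T :: nat
  assumes C_fin: "finite C" and C_nonneg: "\<forall>c\<in>C. c \<ge> 0"
    and \<theta>_nonneg: "\<forall>x. \<theta> x \<ge> 0"
    and \<theta>_supp: "\<forall>x. x \<notin> Xs C \<longrightarrow> \<theta> x = 0"
    and \<theta>_sum: "(\<Sum>x\<in>Xs C. \<theta> x) = 1"
    and \<kappa>_pos: "\<kappa> > 0" and T_pos: "T > 0"
  shows
    "(\<forall>\<tau>. length \<tau> = T \<and> set \<tau> \<subseteq> Xs C \<times> UNIV \<longrightarrow>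
        val C \<theta> \<psi> \<kappa> T \<tau> = (if \<psi> \<tau> \<le> \<kappa> then 0 else \<infinity>))
   \<and> (\<forall>\<tau>. length \<tau> < T \<and> set \<tau> \<subseteq> Xs C \<times> UNIV \<longrightarrow>
        val C \<theta> \<psi> \<kappa> T \<tau> =
          (\<Sum>x\<in>Xs C. ereal (\<theta> x) *
             (case x of (g, r, c) \<Rightarrow>
                min (val C \<theta> \<psi> \<kappa> T (\<tau> @ [(x, r)]))
                    (val C \<theta> \<psi> \<kappa> T (\<tau> @ [(x, \<not> r)]) + ereal c))))
   \<and> (\<forall>\<pi>s :: shield.
        (\<forall>\<tau> x. length \<tau> < T \<and> set \<tau> \<subseteq> Xs C \<times> UNIV \<and> x \<in> Xs C \<longrightarrow>
           (\<forall>y. val C \<theta> \<psi> \<kappa> T (\<tau> @ [(x, \<pi>s \<tau> x)]) + ereal (dev_cost x (\<pi>s \<tau> x))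
                \<le> val C \<theta> \<psi> \<kappa> T (\<tau> @ [(x, y)]) + ereal (dev_cost x y)))
        \<longrightarrow> fair_shields \<theta> \<psi> \<kappa> T \<noteq> {}
        \<longrightarrow> \<pi>s \<in> fair_shields \<theta> \<psi> \<kappa> T
            \<and> (\<forall>\<pi>\<in>fair_shields \<theta> \<psi> \<kappa> T. Ecost C \<theta> \<pi>s T \<le> Ecost C \<theta> \<pi> T))"
proof -
  interpret shield_problem C \<theta> \<psi> \<kappa>
    using C_fin C_nonneg \<theta>_nonneg \<theta>_supp \<theta>_sum by unfold_locales auto
  show ?thesis
  proof (intro conjI; intro allI impI)
    fix \<tau> :: trace
    assume "length \<tau> = T \<and> set \<tau> \<subseteq> Xs C \<times> UNIV"
    then show "val C \<theta> \<psi> \<kappa> T \<tau> = (if \<psi> \<tau> \<le> \<kappa> then 0 else \<infinity>)"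
      by (simp add: val_eq_opt_cost opt_cost_0)
  next
    fix \<tau> :: trace
    assume "length \<tau> < T \<and> set \<tau> \<subseteq> Xs C \<times> UNIV"
    then have "T - length \<tau> = Suc (T - Suc (length \<tau>))"
      by (simp add: Suc_diff_Suc)
    then show "val C \<theta> \<psi> \<kappa> T \<tau> = (\<Sum>x\<in>Xs C. ereal (\<theta> x) * (case x of (g, r, c) \<Rightarrow>
        min (val C \<theta> \<psi> \<kappa> T (\<tau> @ [(x, r)])) (val C \<theta> \<psi> \<kappa> T (\<tau> @ [(x, \<not> r)]) + ereal c)))"
      by (simp add: val_eq_opt_cost opt_cost_Suc bellman_def step_value_def)
  next
    fix \<pi>s :: shield
    assume greedy: "\<forall>\<tau> x. length \<tau> < T \<and> set \<tau> \<subseteq> Xs C \<times> UNIV \<and> x \<in> Xs C \<longrightarrow>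
        (\<forall>y. val C \<theta> \<psi> \<kappa> T (\<tau> @ [(x, \<pi>s \<tau> x)]) + ereal (dev_cost x (\<pi>s \<tau> x))
          \<le> val C \<theta> \<psi> \<kappa> T (\<tau> @ [(x, y)]) + ereal (dev_cost x y))"
      and nonempty: "fair_shields \<theta> \<psi> \<kappa> T \<noteq> {}"
    have "opt_cost (T - Suc (length \<tau>)) (\<tau> @ [(x, \<pi>s \<tau> x)]) + ereal (dev_cost x (\<pi>s \<tau> x))
        \<le> opt_cost (T - Suc (length \<tau>)) (\<tau> @ [(x, y)]) + ereal (dev_cost x y)"
      if "length \<tau> < T" "set \<tau> \<subseteq> Xs C \<times> UNIV" "x \<in> Xs C" for \<tau> x y
      using greedy[rule_format, of \<tau> x y] that by (simp add: val_eq_opt_cost)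
    then show "\<pi>s \<in> fair_shields \<theta> \<psi> \<kappa> T \<and>
        (\<forall>\<pi>\<in>fair_shields \<theta> \<psi> \<kappa> T. Ecost C \<theta> \<pi>s T \<le> Ecost C \<theta> \<pi> T)"
      using nonempty by (rule greedy_shield_minimises_Ecost)
  qed
qed

end
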